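(* Let $(X,d)$ be a complete metric space, $N\geq1$, $\{A_{1},\ldots,A_{N}\}$ a family of nonempty closed subsets of $X$, and $T:X\rightarrow X$. Set $A_{N+1}:=A_{1}$. Suppose: (F1) $T(A_{i})\subseteq A_{i+1}$ for all $i\in\{1,\dots,N\}$; (F3) for every $\varepsilon>0$ there exists $\delta(\varepsilon)>0$ such that for all $i\in\{1,\ldots,N\}$, $x\in A_{i}$, $y\in A_{i+1}$: $\varepsilon\leq d(x,y)<\varepsilon+\delta(\varepsilon)$ implies $d(Tx,Ty)<\varepsilon$. Then $\bigcap_{i=1}^{N}A_{i}$ is nonempty and $T$ has a fixed point $x^{\ast}\in\bigcap_{i=1}^{N}A_{i}$. Moreover, $x^{\ast}$ is the unique fixed point of $T$ in $\bigcup_{i=1}^{N}A_{i}$, and $T^{n}x\rightarrow x^{\ast}$ as $n\rightarrow\infty$ for all $x\in\bigcup_{i=1}^{N}A_{i}$. *)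

theory Defs
  imports "HOL-Analysis.Analysis"
begin

definition cnext :: "nat \<Rightarrow> nat \<Rightarrow> nat" where
  "cnext N i = (if i = N then 1 else Suc i)"

end

theory Submission
  imports Defs
begin

text \<open>
  Reindex the sets periodically, \<open>B j = A (j mod N + 1)\<close>, so that \<open>T\<close> maps \<open>B j\<close> into \<open>B (j + 1)\<close>.
  Along an orbit \<open>x n = T\<^sup>n x\<^sub>0\<close> consecutive points lie in adjacent sets, so the
  Meir--Keeler condition makes the step lengths \<open>dist (x n) (x (n + 1))\<close> decrease to \<open>0\<close>.
  For the Cauchy property fix \<open>\<epsilon>\<close> and its modulus \<open>\<delta>\<close>; once the steps are below \<open>\<delta> / N\<close>, an
  induction over whole periods shows \<open>dist (x n) (x (n + k N + 1)) < \<epsilon> + \<delta>\<close>: applying \<open>T\<close>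
  pushes the distance below \<open>\<epsilon>\<close>, and the remaining \<open>N\<close> short steps cost at most \<open>\<delta>\<close>.
  The limit is then a cluster point of every \<open>B j\<close>, hence in their intersection, and it is fixed
  because \<open>T\<close> is nonexpansive between adjacent sets; the same strict contractivity yields uniqueness.
\<close>

lemma dist_le_sum_steps:
  fixes x :: "nat \<Rightarrow> 'a::metric_space"
  assumes "\<And>m. m \<ge> n \<Longrightarrow> dist (x m) (x (Suc m)) \<le> \<eta>"
  shows "dist (x n) (x (n + j)) \<le> real j * \<eta>"
proof (induction j)
  case 0
  then show ?case by simp
next
  case (Suc j)
  have "dist (x n) (x (n + Suc j)) \<le> dist (x n) (x (n + j)) + dist (x (n + j)) (x (Suc (n + j)))"
    by (simp add: dist_triangle)
  also have "\<dots> \<le> real j * \<eta> + \<eta>"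
    using Suc.IH assms[of "n + j"] by simp
  finally show ?case
    by (simp add: algebra_simps)
qed

locale cyclic_meir_keeler =
  fixes B :: "nat \<Rightarrow> 'a::metric_space set" and T :: "'a \<Rightarrow> 'a" and N :: nat
  assumes period_pos: "N \<ge> 1"
    and periodic: "B (j + N) = B j"
    and maps_to_next: "y \<in> B j \<Longrightarrow> T y \<in> B (Suc j)"
    and meir_keeler: "\<epsilon> > 0 \<Longrightarrow> \<exists>\<delta>>0. \<forall>j. \<forall>y\<in>B j. \<forall>z\<in>B (Suc j).
               \<epsilon> \<le> dist y z \<and> dist y z < \<epsilon> + \<delta> \<longrightarrow> dist (T y) (T z) < \<epsilon>"
begin

abbreviation orbit :: "'a \<Rightarrow> nat \<Rightarrow> 'a" where
  "orbit x n \<equiv> (T ^^ n) x"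

lemma periodic_mult: "B (j + k * N) = B j"
proof (induction k)
  case 0
  then show ?case by simp
next
  case (Suc k)
  have "B (j + Suc k * N) = B (j + k * N + N)"
    by (simp add: algebra_simps)
  then show ?case
    using periodic Suc.IH by simp
qed

lemma dist_T_less:
  assumes "y \<in> B j" "z \<in> B (Suc j)" "y \<noteq> z"
  shows "dist (T y) (T z) < dist y z"
proof -
  have "dist y z > 0"
    using assms(3) by simp
  then obtain \<delta> where "\<delta> > 0" and "\<forall>j. \<forall>y'\<in>B j. \<forall>z'\<in>B (Suc j).
      dist y z \<le> dist y' z' \<and> dist y' z' < dist y z + \<delta> \<longrightarrow> dist (T y') (T z') < dist y z"
    using meir_keeler by blast
  then show ?thesis
    using assms(1,2) by auto
qed

lemma dist_T_le:
  assumes "y \<in> B j" "z \<in> B (Suc j)"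
  shows "dist (T y) (T z) \<le> dist y z"
  using dist_T_less[OF assms] by (cases "y = z") auto

text \<open>Nonexpansiveness lets us drop the lower bound \<open>\<epsilon> \<le> dist y z\<close> from the Meir--Keeler condition.\<close>

lemma meir_keeler_below:
  assumes "\<epsilon> > 0"
  obtains \<delta> where "\<delta> > 0"
    and "\<And>j y z. y \<in> B j \<Longrightarrow> z \<in> B (Suc j) \<Longrightarrow> dist y z < \<epsilon> + \<delta> \<Longrightarrow> dist (T y) (T z) < \<epsilon>"
proof -
  obtain \<delta> where "\<delta> > 0" and mk: "\<forall>j. \<forall>y\<in>B j. \<forall>z\<in>B (Suc j).
      \<epsilon> \<le> dist y z \<and> dist y z < \<epsilon> + \<delta> \<longrightarrow> dist (T y) (T z) < \<epsilon>"
    using meir_keeler[OF assms] by blast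
  have "dist (T y) (T z) < \<epsilon>"
    if "y \<in> B j" "z \<in> B (Suc j)" "dist y z < \<epsilon> + \<delta>" for j y z
  proof (cases "\<epsilon> \<le> dist y z")
    case True
    then show ?thesis using mk that by blast
  next
    case False
    then show ?thesis using dist_T_le[OF that(1,2)] by simp
  qed
  with \<open>\<delta> > 0\<close> show ?thesis
    using that by blast
qed

lemma fixed_point_unique:
  assumes "z \<in> B j" "T z = z" "p \<in> B (Suc j)" "T p = p"
  shows "z = p"
  using dist_T_less[OF assms(1,3)] assms(2,4) by auto

context
  fixes x0 :: 'a and c :: nat
  assumes x0_in: "x0 \<in> B c"
begin

lemma orbit_in: "orbit x0 n \<in> B (c + n)"
proof (induction n)
  case 0
  then show ?case using x0_in by simp
next
  case (Suc n)
  then show ?case using maps_to_next by simp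
qed

lemma orbit_in_periodic: "orbit x0 (n + k * N) \<in> B (c + n)"
  using orbit_in[of "n + k * N"] periodic_mult[of "c + n" k] by (simp add: add.assoc)

lemma orbit_step_tendsto_0: "(\<lambda>n. dist (orbit x0 n) (orbit x0 (Suc n))) \<longlonglongrightarrow> 0"
proof -
  define d where "d n = dist (orbit x0 n) (orbit x0 (Suc n))" for n
  have "d (Suc n) \<le> d n" for n
    using dist_T_le[OF orbit_in[of n] orbit_in[of "Suc n", simplified]] by (simp add: d_def)
  then have "decseq d"
    by (simp add: decseq_SucI)
  then obtain L where lim: "d \<longlonglongrightarrow> L" and L_le: "\<And>n. L \<le> d n"
    using decseq_convergent[of d 0] by (auto simp: d_def)
  have "L \<ge> 0"
    using LIMSEQ_le_const[OF lim] by (auto simp: d_def)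
  moreover have "\<not> L > 0"
  proof
    assume "L > 0"
    then obtain \<delta> where "\<delta> > 0" and mk: "\<And>j y z. y \<in> B j \<Longrightarrow> z \<in> B (Suc j) \<Longrightarrow>
        dist y z < L + \<delta> \<Longrightarrow> dist (T y) (T z) < L"
      using meir_keeler_below by metis
    obtain n where "d n < L + \<delta>"
      using order_tendstoD(2)[OF lim, of "L + \<delta>"] \<open>\<delta> > 0\<close> by (auto simp: eventually_sequentially)
    then have "d (Suc n) < L"
      using mk[OF orbit_in[of n] orbit_in[of "Suc n", simplified]] by (simp add: d_def)
    with L_le[of "Suc n"] show False
      by simp
  qed
  ultimately have "d \<longlonglongrightarrow> 0"
    using lim by simp
  then show ?thesis
    unfolding d_def .
qed

lemma orbit_dist_across_periods:
  assumes "\<epsilon> > 0" "\<delta> > 0"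
    and mk: "\<And>j y z. y \<in> B j \<Longrightarrow> z \<in> B (Suc j) \<Longrightarrow> dist y z < \<epsilon> + \<delta> \<Longrightarrow> dist (T y) (T z) < \<epsilon>"
    and short: "\<And>m. m \<ge> K \<Longrightarrow> dist (orbit x0 m) (orbit x0 (Suc m)) < \<delta> / N"
    and "n \<ge> K"
  shows "dist (orbit x0 n) (orbit x0 (n + k * N + 1)) < \<epsilon> + \<delta>"
proof (induction k)
  case 0
  have "\<delta> / N \<le> \<delta>"
    using \<open>\<delta> > 0\<close> period_pos by (simp add: divide_le_eq)
  then show ?case
    using short[OF \<open>n \<ge> K\<close>] \<open>\<epsilon> > 0\<close> by simp
next
  case (Suc k)
  let ?m = "n + k * N + 1"
  have "orbit x0 ?m \<in> B (Suc (c + n))"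
    using orbit_in_periodic[of "Suc n" k] by simp
  then have jump: "dist (orbit x0 (Suc n)) (orbit x0 (Suc ?m)) < \<epsilon>"
    using mk[OF orbit_in[of n] _ Suc.IH] by simp
  have tail: "dist (orbit x0 (Suc ?m)) (orbit x0 (Suc ?m + (N - 1))) \<le> real (N - 1) * (\<delta> / N)"
    by (rule dist_le_sum_steps) (use short \<open>n \<ge> K\<close> in \<open>auto intro: less_imp_le\<close>)
  have first: "dist (orbit x0 n) (orbit x0 (Suc n)) < \<delta> / N"
    using short \<open>n \<ge> K\<close> by simp
  have "n + Suc k * N + 1 = Suc ?m + (N - 1)"
    using period_pos by simp
  then have "dist (orbit x0 n) (orbit x0 (n + Suc k * N + 1))
      \<le> dist (orbit x0 n) (orbit x0 (Suc n)) + dist (orbit x0 (Suc n)) (orbit x0 (Suc ?m))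
        + dist (orbit x0 (Suc ?m)) (orbit x0 (Suc ?m + (N - 1)))"
    using dist_triangle[of "orbit x0 n" _ "orbit x0 (Suc n)"]
      dist_triangle[of "orbit x0 (Suc n)" _ "orbit x0 (Suc ?m)"] by (smt (verit))
  also have "\<dots> < \<delta> / N + \<epsilon> + real (N - 1) * (\<delta> / N)"
    using first jump tail by linarith
  also have "\<dots> = \<epsilon> + (1 + real (N - 1)) * (\<delta> / N)"
    by (simp add: algebra_simps)
  also have "\<dots> = \<epsilon> + \<delta>"
    using period_pos by simp
  finally show ?case .
qed

lemma orbit_Cauchy: "Cauchy (orbit x0)"
  unfolding Cauchy_altdef
proof (intro allI impI)
  fix e :: real
  assume "e > 0"
  define \<epsilon> where "\<epsilon> = e / 3"
  have "\<epsilon> > 0"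
    using \<open>e > 0\<close> by (simp add: \<epsilon>_def)
  then obtain \<delta>0 where "\<delta>0 > 0" and mk0: "\<And>j y z. y \<in> B j \<Longrightarrow> z \<in> B (Suc j) \<Longrightarrow>
      dist y z < \<epsilon> + \<delta>0 \<Longrightarrow> dist (T y) (T z) < \<epsilon>"
    using meir_keeler_below by metis
  define \<delta> where "\<delta> = min \<delta>0 \<epsilon>"
  have "\<delta> > 0" "\<delta> \<le> \<epsilon>"
    using \<open>\<delta>0 > 0\<close> \<open>\<epsilon> > 0\<close> by (auto simp: \<delta>_def)
  have mk: "dist (T y) (T z) < \<epsilon>" if "y \<in> B j" "z \<in> B (Suc j)" "dist y z < \<epsilon> + \<delta>" for j y z
    using mk0[OF that(1,2)] that(3) by (simp add: \<delta>_def)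
  have "\<delta> / N > 0"
    using \<open>\<delta> > 0\<close> period_pos by simp
  then obtain K where short: "\<And>m. m \<ge> K \<Longrightarrow> dist (orbit x0 m) (orbit x0 (Suc m)) < \<delta> / N"
    using order_tendstoD(2)[OF orbit_step_tendsto_0] by (auto simp: eventually_sequentially)
  show "\<exists>M. \<forall>a\<ge>M. \<forall>b>a. dist (orbit x0 a) (orbit x0 b) < e"
  proof (intro exI allI impI)
    fix a b
    assume "K \<le> a" "a < b"
    define q where "q = (b - Suc a) div N"
    define r where "r = (b - Suc a) mod N"
    have b_eq: "b = a + q * N + 1 + r"
      using \<open>a < b\<close> div_mult_mod_eq[of "b - Suc a" N] unfolding q_def r_def by linarith
    have "r < N"
      using period_pos by (simp add: r_def)
    have "dist (orbit x0 a) (orbit x0 b)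
        \<le> dist (orbit x0 a) (orbit x0 (a + q * N + 1)) + dist (orbit x0 (a + q * N + 1)) (orbit x0 (a + q * N + 1 + r))"
      unfolding b_eq by (rule dist_triangle)
    also have "\<dots> < \<epsilon> + \<delta> + real r * (\<delta> / N)"
    proof -
      have "dist (orbit x0 (a + q * N + 1)) (orbit x0 (a + q * N + 1 + r)) \<le> real r * (\<delta> / N)"
        by (rule dist_le_sum_steps) (use short \<open>K \<le> a\<close> in \<open>auto intro: less_imp_le\<close>)
      moreover have "dist (orbit x0 a) (orbit x0 (a + q * N + 1)) < \<epsilon> + \<delta>"
        using \<open>\<epsilon> > 0\<close> \<open>\<delta> > 0\<close> mk short \<open>K \<le> a\<close> by (rule orbit_dist_across_periods)
      ultimately show ?thesis
        by linarith
    qed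
    also have "\<dots> \<le> e"
    proof -
      have "real r * (\<delta> / N) \<le> real N * (\<delta> / N)"
        using \<open>r < N\<close> \<open>\<delta> > 0\<close> by (intro mult_right_mono) auto
      then show ?thesis
        using period_pos \<open>\<delta> \<le> \<epsilon>\<close> by (simp add: \<epsilon>_def)
    qed
    finally show "dist (orbit x0 a) (orbit x0 b) < e" .
  qed
qed

end

end

locale complete_cyclic_meir_keeler = cyclic_meir_keeler B T N
  for B :: "nat \<Rightarrow> 'a::complete_space set" and T N +
  assumes closed: "closed (B j)"
begin

context
  fixes x0 :: 'a and c :: nat
  assumes x0_in: "x0 \<in> B c"
begin

lemma orbit_convergent: "convergent (orbit x0)"
  using orbit_Cauchy[OF x0_in] by (simp add: Cauchy_convergent_iff)

lemma orbit_limit_in: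
  assumes lim: "orbit x0 \<longlonglongrightarrow> p"
  shows "p \<in> B j"
proof -
  \<comment> \<open>times \<open>t\<close> with \<open>c + t \<equiv> j (mod N)\<close>, at which the orbit lies in \<open>B j\<close>\<close>
  define f where "f k = (c * N + j - c) + k * N" for k
  have "strict_mono f"
    using period_pos by (intro strict_monoI) (simp add: f_def)
  then have "(orbit x0 \<circ> f) \<longlonglongrightarrow> p"
    by (rule LIMSEQ_subseq_LIMSEQ[OF lim])
  moreover have "(orbit x0 \<circ> f) k \<in> B j" for k
  proof -
    have "c \<le> c * N"
      using period_pos by simp
    then have "c + (c * N + j - c) = j + c * N"
      by linarith
    then show ?thesis
      using orbit_in_periodic[OF x0_in, of "c * N + j - c" k] periodic_mult[of j c] by (simp add: f_def)
  qed
  ultimately show ?thesis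
    using closed_sequentially[OF closed] by blast
qed

lemma orbit_limit_fixed:
  assumes lim: "orbit x0 \<longlonglongrightarrow> p"
  shows "T p = p"
proof -
  have le: "dist (orbit x0 (Suc n)) (T p) \<le> dist (orbit x0 n) p" for n
    using dist_T_le[OF orbit_in[OF x0_in, of n] orbit_limit_in[OF lim, of "Suc (c + n)"]] by simp
  have "(\<lambda>n. dist (orbit x0 n) p) \<longlonglongrightarrow> 0"
    using lim by (rule tendsto_dist_iff[THEN iffD1])
  then have "(\<lambda>n. dist (orbit x0 (Suc n)) (T p)) \<longlonglongrightarrow> 0"
    by (rule Lim_null_comparison[OF always_eventually, rotated]) (use le in simp)
  then have "(\<lambda>n. orbit x0 (Suc n)) \<longlonglongrightarrow> T p"
    by (rule tendsto_dist_iff[THEN iffD2])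
  moreover have "(\<lambda>n. orbit x0 (Suc n)) \<longlonglongrightarrow> p"
    using lim by (rule LIMSEQ_Suc)
  ultimately show ?thesis
    by (rule LIMSEQ_unique)
qed

end

lemma orbit_tendsto_fixed_point:
  assumes "x0 \<in> B c"
  obtains p where "\<And>j. p \<in> B j" "T p = p" "orbit x0 \<longlonglongrightarrow> p"
  using orbit_convergent[OF assms] orbit_limit_in[OF assms] orbit_limit_fixed[OF assms] that
  unfolding convergent_def by blast

theorem unique_attracting_fixed_point:
  assumes "B c \<noteq> {}"
  obtains p where "\<And>j. p \<in> B j" and "T p = p"
    and "\<And>z j. z \<in> B j \<Longrightarrow> T z = z \<Longrightarrow> z = p"
    and "\<And>x j. x \<in> B j \<Longrightarrow> orbit x \<longlonglongrightarrow> p"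
proof -
  obtain x0 where "x0 \<in> B c"
    using assms by blast
  then obtain p where p_in: "\<And>j. p \<in> B j" and "T p = p"
    using orbit_tendsto_fixed_point by metis
  have unique: "z = p" if "z \<in> B j" "T z = z" for z j
    using fixed_point_unique[OF that p_in \<open>T p = p\<close>] .
  have "orbit x \<longlonglongrightarrow> p" if x_in: "x \<in> B j" for x j
  proof -
    obtain q where "\<And>i. q \<in> B i" "T q = q" "orbit x \<longlonglongrightarrow> q"
      using orbit_tendsto_fixed_point[OF x_in] by blast
    moreover from this have "q = p"
      using unique by blast
    ultimately show ?thesis
      by simp
  qed
  with p_in \<open>T p = p\<close> unique show ?thesis
    using that by blast
qed

end

lemma cnext_mod_Suc: "N \<ge> 1 \<Longrightarrow> cnext N (j mod N + 1) = Suc j mod N + 1"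
  by (simp add: cnext_def mod_Suc)

lemma range_mod_Suc:
  fixes N :: nat
  assumes "N \<ge> 1"
  shows "range (\<lambda>j. j mod N + 1) = {1..N}"
proof
  show "range (\<lambda>j. j mod N + 1) \<subseteq> {1..N}"
    using assms by (auto simp: Suc_le_eq)
  have "i = (i - 1) mod N + 1" if "i \<in> {1..N}" for i
    using that by auto
  then show "{1..N} \<subseteq> range (\<lambda>j. j mod N + 1)"
    by blast
qed

lemma complete_cyclic_meir_keeler_mod_reindex:
  fixes A :: "nat \<Rightarrow> 'a::complete_space set"
  assumes N: "N \<ge> 1"
    and closed: "\<And>i. i \<in> {1..N} \<Longrightarrow> closed (A i)"
    and F1: "\<And>i. i \<in> {1..N} \<Longrightarrow> T ` A i \<subseteq> A (cnext N i)"
    and F3: "\<And>\<epsilon>. \<epsilon> > 0 \<Longrightarrow> \<exists>\<delta>>0. \<forall>i\<in>{1..N}. \<forall>x\<in>A i. \<forall>y\<in>A (cnext N i).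
               \<epsilon> \<le> dist x y \<and> dist x y < \<epsilon> + \<delta> \<longrightarrow> dist (T x) (T y) < \<epsilon>"
  shows "complete_cyclic_meir_keeler (\<lambda>j. A (j mod N + 1)) T N"
proof unfold_locales
  have idx: "j mod N + 1 \<in> {1..N}" for j
    using N by (simp add: Suc_leI)
  show "N \<ge> 1"
    by (rule N)
  show "A ((j + N) mod N + 1) = A (j mod N + 1)" for j
    by simp
  show "T y \<in> A (Suc j mod N + 1)" if "y \<in> A (j mod N + 1)" for y j
    using F1[OF idx[of j]] that cnext_mod_Suc[OF N, of j] by auto
  show "\<exists>\<delta>>0. \<forall>j. \<forall>y\<in>A (j mod N + 1). \<forall>z\<in>A (Suc j mod N + 1).
      \<epsilon> \<le> dist y z \<and> dist y z < \<epsilon> + \<delta> \<longrightarrow> dist (T y) (T z) < \<epsilon>" if "\<epsilon> > 0" for \<epsilon>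
    using F3[OF that] idx cnext_mod_Suc[OF N] by metis
  show "closed (A (j mod N + 1))" for j
    using closed[OF idx] .
qed

theorem corollary7:
  fixes A :: "nat \<Rightarrow> 'a::complete_space set"
    and T :: "'a \<Rightarrow> 'a"
    and N :: nat
  assumes N: "N \<ge> 1"
    and nonempty: "\<And>i. i \<in> {1..N} \<Longrightarrow> A i \<noteq> {}"
    and closed: "\<And>i. i \<in> {1..N} \<Longrightarrow> closed (A i)"
    and F1: "\<And>i. i \<in> {1..N} \<Longrightarrow> T ` A i \<subseteq> A (cnext N i)"
    and F3: "\<And>\<epsilon>. \<epsilon> > 0 \<Longrightarrow> \<exists>\<delta>>0. \<forall>i\<in>{1..N}. \<forall>x\<in>A i. \<forall>y\<in>A (cnext N i).
               \<epsilon> \<le> dist x y \<and> dist x y < \<epsilon> + \<delta> \<longrightarrow> dist (T x) (T y) < \<epsilon>"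
  shows "(\<Inter>i\<in>{1..N}. A i) \<noteq> {} \<and>
         (\<exists>xs. xs \<in> (\<Inter>i\<in>{1..N}. A i) \<and> T xs = xs \<and>
               (\<forall>z\<in>(\<Union>i\<in>{1..N}. A i). T z = z \<longrightarrow> z = xs) \<and>
               (\<forall>x\<in>(\<Union>i\<in>{1..N}. A i). (\<lambda>n. (T ^^ n) x) \<longlonglongrightarrow> xs))"
proof -
  interpret complete_cyclic_meir_keeler "\<lambda>j. A (j mod N + 1)" T N
    using N closed F1 F3 by (rule complete_cyclic_meir_keeler_mod_reindex)
  have "A (0 mod N + 1) \<noteq> {}"
    using nonempty N by simp
  then obtain p where "\<And>j. p \<in> A (j mod N + 1)" and "T p = p"
    and "\<And>z j. z \<in> A (j mod N + 1) \<Longrightarrow> T z = z \<Longrightarrow> z = p"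
    and "\<And>x j. x \<in> A (j mod N + 1) \<Longrightarrow> orbit x \<longlonglongrightarrow> p"
    by (rule unique_attracting_fixed_point) blast
  moreover have "A ` {1..N} = range (\<lambda>j. A (j mod N + 1))"
    using range_mod_Suc[OF N] by (metis range_composition)
  ultimately show ?thesis
    by (simp only:) blast
qed

end
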